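(* Let $K\in\{\mathbb R,\mathbb C,\mathbb H\}$ and let $(E,d)$ be a metric vector space over $K$ such that $d$ is $C_0$-translation invariant and $(C_1,C_2,C_3)$-lipschitz multiplicative. Let $d_0(x,y)=\int_{\mathbb U}d(ux,uy)\,d\mu(u)$, $\delta(x,y)=\lim_{n\to\infty}\frac1n d(nx,ny)$ and $\delta_0(x,y)=\lim_{n\to\infty}\frac1n d_0(nx,ny)$. Then for all $x,y\in E$, $$\delta_0(x,y)=\int_{\mathbb U}\delta(ux,uy)\,d\mu(u).$$
   Context: A metric vector space is a topological vector space over $K$ whose topology is generated by the metric $d$. $\mathbb U=\{u\in K:|u|=1\}$, $\mu$ the right-invariant Haar probability measure on $\mathbb U$. $d$ is $C_0$-translation invariant if $d(x+z,y+z)\le d(x,y)+C_0$ for all $x,y,z$. $(C_1,C_2,C_3)$-lipschitz multiplicative ($C_1\ge1$, $C_2,C_3\ge0$) means $C_1^{-1}|\lambda|d(x,y)-C_2|\lambda|-C_3\le d(\lambda x,\lambda y)\le C_1|\lambda|d(x,y)+C_2|\lambda|+C_3$ for all $\lambda\in K$, $x,y\in E$. (Under these hypotheses the limits defining $\delta,\delta_0$ exist.) *)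

theory Defs
  imports "HOL-Analysis.Analysis" "HOL-Probability.Probability"
begin

text \<open>The scalar field K is modelled as a type of class real_normed_div_algebra:
an associative real division algebra with multiplicative norm. By the
Urbanik--Wright / Frobenius theorem these are exactly R, C and H.\<close>

definition unit_sphere :: "'k::real_normed_div_algebra set" where
  "unit_sphere = {u. norm u = 1}"

definition right_haar_prob :: "'k::real_normed_div_algebra measure \<Rightarrow> bool" where
  "right_haar_prob \<mu> \<longleftrightarrow>
     prob_space \<mu> \<and> space \<mu> = unit_sphere \<and>
     sets \<mu> = sets (restrict_space borel unit_sphere) \<and>
     (\<forall>u\<in>unit_sphere. \<forall>A\<in>sets \<mu>. emeasure \<mu> ((\<lambda>v. v * u) ` A) = emeasure \<mu> A)"

definition left_vector_space :: "('k::real_normed_div_algebra \<Rightarrow> 'e::ab_group_add \<Rightarrow> 'e) \<Rightarrow> bool" where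
  "left_vector_space sc \<longleftrightarrow>
     (\<forall>a x y. sc a (x + y) = sc a x + sc a y) \<and>
     (\<forall>a b x. sc (a + b) x = sc a x + sc b x) \<and>
     (\<forall>a b x. sc a (sc b x) = sc (a * b) x) \<and>
     (\<forall>x. sc 1 x = x)"

definition metric_vector_space :: "('k::real_normed_div_algebra \<Rightarrow> 'e::ab_group_add \<Rightarrow> 'e) \<Rightarrow> ('e \<Rightarrow> 'e \<Rightarrow> real) \<Rightarrow> bool" where
  "metric_vector_space sc d \<longleftrightarrow>
     left_vector_space sc \<and> Metric_space UNIV d \<and>
     continuous_map (prod_topology (Metric_space.mtopology UNIV d) (Metric_space.mtopology UNIV d))
        (Metric_space.mtopology UNIV d) (\<lambda>(x, y). x + y) \<and>
     continuous_map (prod_topology euclidean (Metric_space.mtopology UNIV d))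
        (Metric_space.mtopology UNIV d) (\<lambda>(a, x). sc a x)"

definition translation_invariant_C :: "real \<Rightarrow> ('e::ab_group_add \<Rightarrow> 'e \<Rightarrow> real) \<Rightarrow> bool" where
  "translation_invariant_C C0 d \<longleftrightarrow> (\<forall>x y z. d (x + z) (y + z) \<le> d x y + C0)"

definition lipschitz_multiplicative ::
  "real \<Rightarrow> real \<Rightarrow> real \<Rightarrow> ('k::real_normed_div_algebra \<Rightarrow> 'e \<Rightarrow> 'e) \<Rightarrow> ('e \<Rightarrow> 'e \<Rightarrow> real) \<Rightarrow> bool" where
  "lipschitz_multiplicative C1 C2 C3 sc d \<longleftrightarrow>
     C1 \<ge> 1 \<and> C2 \<ge> 0 \<and> C3 \<ge> 0 \<and>
     (\<forall>c x y. d (sc c x) (sc c y) \<ge> norm c * d x y / C1 - C2 * norm c - C3 \<and>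
               d (sc c x) (sc c y) \<le> C1 * norm c * d x y + C2 * norm c + C3)"

definition d0 :: "'k::real_normed_div_algebra measure \<Rightarrow> ('k \<Rightarrow> 'e \<Rightarrow> 'e) \<Rightarrow> ('e \<Rightarrow> 'e \<Rightarrow> real) \<Rightarrow> 'e \<Rightarrow> 'e \<Rightarrow> real" where
  "d0 \<mu> sc d x y = (\<integral>u. d (sc u x) (sc u y) \<partial>\<mu>)"

definition asymp :: "('k::real_normed_div_algebra \<Rightarrow> 'e \<Rightarrow> 'e) \<Rightarrow> ('e \<Rightarrow> 'e \<Rightarrow> real) \<Rightarrow> 'e \<Rightarrow> 'e \<Rightarrow> real" where
  "asymp sc D x y = lim (\<lambda>n::nat. D (sc (of_nat n) x) (sc (of_nat n) y) / real n)"

end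

theory Submission
  imports Defs
begin

text \<open>Translation quasi-invariance and the triangle inequality make
n \<mapsto> d(nx, ny) + 2 C0 subadditive, so by Fekete's lemma the limit defining
\<delta>(x, y) exists, and d(nx, ny)/n \<le> d(x, y) + 2 C0. For u in U, Lipschitz
multiplicativity bounds d(ux, uy) by C1 d(x, y) + C2 + C3, so the functions
u \<mapsto> d(n ux, n uy)/n are uniformly bounded on U. Since n commutes with u,
d0(nx, ny)/n is their integral, and dominated convergence gives the claim.\<close>

lemma subadditive_mult_add_le:
  fixes a :: "nat \<Rightarrow> real"
  assumes sub: "\<And>m n. a (m + n) \<le> a m + a n"
  shows "a (q * m + r) \<le> real q * a m + a r"
proof (induction q)
  case (Suc q)
  have "a (Suc q * m + r) = a (m + (q * m + r))" by (simp add: algebra_simps)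
  also have "\<dots> \<le> a m + a (q * m + r)" by (rule sub)
  also have "\<dots> \<le> real (Suc q) * a m + a r" using Suc by (simp add: algebra_simps)
  finally show ?case .
qed simp

lemma fekete_subadditive_LIMSEQ:
  fixes a :: "nat \<Rightarrow> real"
  assumes sub: "\<And>m n. a (m + n) \<le> a m + a n" and nonneg: "\<And>n. 0 \<le> a n"
  shows "(\<lambda>n. a n / real n) \<longlonglongrightarrow> (INF n\<in>{1..}. a n / real n)"
proof -
  let ?L = "INF n\<in>{1..}. a n / real n"
  have bdd: "bdd_below ((\<lambda>n. a n / real n) ` {1..})"
    by (rule bdd_belowI2[of _ 0]) (simp add: nonneg)
  show ?thesis
  proof (rule order_tendstoI)
    fix c assume "c < ?L"
    then have "c < a n / real n" if "n \<ge> 1" for n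
      using cINF_lower[OF bdd, of n] that by simp
    then show "\<forall>\<^sub>F n in sequentially. c < a n / real n"
      by (auto simp: eventually_sequentially)
  next
    fix c assume "?L < c"
    then obtain m where m: "m \<ge> 1" "a m / real m < c"
      using cINF_less_iff[OF _ bdd] by auto
    define B where "B = (\<Sum>r<m. a r)"
    have "(\<lambda>n. a m / real m + B / real n) \<longlonglongrightarrow> a m / real m + 0"
      by (intro tendsto_add tendsto_const tendsto_divide_0[OF tendsto_const]
          filterlim_at_top_imp_at_infinity filterlim_real_sequentially)
    then have "\<forall>\<^sub>F n in sequentially. a m / real m + B / real n < c"
      using m(2) by (simp add: order_tendstoD(2))
    moreover have "\<forall>\<^sub>F n in sequentially. a n / real n \<le> a m / real m + B / real n"
    proof (rule eventually_mono[OF eventually_ge_at_top[of 1]])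
      fix n :: nat assume "1 \<le> n"
      have "a n \<le> real (n div m) * a m + a (n mod m)"
        using subadditive_mult_add_le[of a "n div m" m "n mod m"] sub by simp
      also have "a (n mod m) \<le> B"
        unfolding B_def using m(1) by (intro member_le_sum) (auto simp: nonneg)
      also have "real (n div m) * a m \<le> real n / real m * a m"
      proof (rule mult_right_mono)
        have "real (n div m) * real m \<le> real n"
          by (metis of_nat_le_iff of_nat_mult div_times_less_eq_dividend)
        then show "real (n div m) \<le> real n / real m"
          using m(1) by (simp add: le_divide_eq)
      qed (rule nonneg)
      finally show "a n / real n \<le> a m / real m + B / real n"
        using \<open>1 \<le> n\<close> by (simp add: field_simps)
    qed
    ultimately show "\<forall>\<^sub>F n in sequentially. a n / real n < c"
      by eventually_elim linarith
  qed
qed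

lemma translation_invariant_C_nonneg: "translation_invariant_C C0 d \<Longrightarrow> 0 \<le> C0"
  unfolding translation_invariant_C_def by (metis add.right_neutral le_add_same_cancel1)

lemma translation_invariant_C_dist_add_le:
  assumes "Metric_space UNIV d" and "translation_invariant_C C0 d"
  shows "d (x + x') (y + y') \<le> d x y + d x' y' + 2 * C0"
proof -
  have "d (x + x') (y + y') \<le> d (x + x') (y + x') + d (x' + y) (y' + y)"
    using Metric_space.triangle[OF assms(1)] by (metis UNIV_I add.commute)
  also have "\<dots> \<le> (d x y + C0) + (d x' y' + C0)"
    using assms(2) unfolding translation_invariant_C_def by (intro add_mono) auto
  finally show ?thesis by simp
qed

lemma left_vector_space_scale_zero: "left_vector_space sc \<Longrightarrow> sc 0 x = 0"
  unfolding left_vector_space_def by (metis add_cancel_right_right)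

lemma left_vector_space_scale_of_nat_add:
  "left_vector_space sc \<Longrightarrow> sc (of_nat (m + n)) x = sc (of_nat m) x + sc (of_nat n) x"
  unfolding left_vector_space_def by simp

lemma left_vector_space_scale_of_nat_commute:
  "left_vector_space sc \<Longrightarrow> sc (of_nat n) (sc u x) = sc u (sc (of_nat n) x)"
  unfolding left_vector_space_def by (simp add: mult_of_nat_commute)

lemma dist_scale_of_nat_subadditive:
  assumes "left_vector_space sc" "Metric_space UNIV d" "translation_invariant_C C0 d"
  shows "d (sc (of_nat (m + n)) x) (sc (of_nat (m + n)) y) + 2 * C0
    \<le> (d (sc (of_nat m) x) (sc (of_nat m) y) + 2 * C0)
      + (d (sc (of_nat n) x) (sc (of_nat n) y) + 2 * C0)"
  using translation_invariant_C_dist_add_le[OF assms(2,3),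
      of "sc (of_nat m) x" "sc (of_nat n) x" "sc (of_nat m) y" "sc (of_nat n) y"]
  unfolding left_vector_space_scale_of_nat_add[OF assms(1)] by linarith

lemma asymp_LIMSEQ:
  assumes "left_vector_space sc" "Metric_space UNIV d" "translation_invariant_C C0 d"
  shows "(\<lambda>n. d (sc (of_nat n) x) (sc (of_nat n) y) / real n) \<longlonglongrightarrow> asymp sc d x y"
proof -
  define a where "a n = d (sc (of_nat n) x) (sc (of_nat n) y) + 2 * C0" for n
  have "(\<lambda>n. a n / real n) \<longlonglongrightarrow> (INF n\<in>{1..}. a n / real n)"
  proof (rule fekete_subadditive_LIMSEQ)
    show "a (m + n) \<le> a m + a n" for m n
      unfolding a_def by (rule dist_scale_of_nat_subadditive[OF assms])
    show "0 \<le> a n" for n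
      using Metric_space.nonneg[OF assms(2)] translation_invariant_C_nonneg[OF assms(3)]
      unfolding a_def by simp
  qed
  moreover have "(\<lambda>n. 2 * C0 / real n) \<longlonglongrightarrow> 0"
    by (intro tendsto_divide_0[OF tendsto_const] filterlim_at_top_imp_at_infinity
        filterlim_real_sequentially)
  ultimately have "(\<lambda>n. a n / real n - 2 * C0 / real n) \<longlonglongrightarrow> (INF n\<in>{1..}. a n / real n) - 0"
    by (rule tendsto_diff)
  then have "convergent (\<lambda>n. d (sc (of_nat n) x) (sc (of_nat n) y) / real n)"
    by (auto simp: a_def diff_divide_distrib[symmetric] convergent_def)
  then show ?thesis
    unfolding asymp_def by (rule convergent_LIMSEQ_iff[THEN iffD1])
qed

lemma dist_scale_of_nat_div_le:
  assumes "left_vector_space sc" "Metric_space UNIV d" "translation_invariant_C C0 d"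
  shows "d (sc (of_nat n) x) (sc (of_nat n) y) / real n \<le> d x y + 2 * C0"
proof -
  define a where "a n = d (sc (of_nat n) x) (sc (of_nat n) y) + 2 * C0" for n
  have "a (n * 1 + 0) \<le> real n * a 1 + a 0"
    unfolding a_def by (rule subadditive_mult_add_le, rule dist_scale_of_nat_subadditive[OF assms])
  moreover have "a 0 = 2 * C0" "a 1 = d x y + 2 * C0"
    using assms(1) unfolding a_def left_vector_space_def
    by (simp_all add: left_vector_space_scale_zero[OF assms(1)] Metric_space.zero[OF assms(2)])
  ultimately have "d (sc (of_nat n) x) (sc (of_nat n) y) \<le> (d x y + 2 * C0) * real n"
    by (simp add: a_def mult.commute)
  then show ?thesis
    using Metric_space.nonneg[OF assms(2)] translation_invariant_C_nonneg[OF assms(3)]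
    by (cases "n = 0") (simp_all add: pos_divide_le_eq)
qed

lemma dist_scale_of_nat_div_unit_le:
  assumes "left_vector_space sc" "Metric_space UNIV d" "translation_invariant_C C0 d"
    and "lipschitz_multiplicative C1 C2 C3 sc d" and "norm u = 1"
  shows "\<bar>d (sc (of_nat n) (sc u x)) (sc (of_nat n) (sc u y)) / real n\<bar>
    \<le> C1 * d x y + C2 + C3 + 2 * C0"
proof -
  have "d (sc u x) (sc u y) \<le> C1 * d x y + C2 + C3"
    using assms(4,5) unfolding lipschitz_multiplicative_def by (metis mult.right_neutral)
  moreover have "0 \<le> d (sc (of_nat n) (sc u x)) (sc (of_nat n) (sc u y)) / real n"
    using Metric_space.nonneg[OF assms(2)] by simp
  moreover have "d (sc (of_nat n) (sc u x)) (sc (of_nat n) (sc u y)) / real n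
      \<le> d (sc u x) (sc u y) + 2 * C0"
    by (rule dist_scale_of_nat_div_le[OF assms(1-3)])
  ultimately show ?thesis by simp
qed

lemma metric_vector_space_continuous_on_dist_scale:
  assumes "metric_vector_space sc d"
  shows "continuous_on UNIV (\<lambda>u. d (sc u x) (sc u y))"
proof -
  let ?T = "Metric_space.mtopology UNIV d"
  have ms: "Metric_space UNIV d"
    and cont: "continuous_map (prod_topology euclidean ?T) ?T (\<lambda>(a, x). sc a x)"
    using assms unfolding metric_vector_space_def by auto
  have "continuous_map euclidean ?T (\<lambda>u. sc u z)" for z
  proof -
    have "continuous_map euclidean (prod_topology euclidean ?T) (\<lambda>u. (u, z))"
      using Metric_space.topspace_mtopology[OF ms]
      by (intro continuous_map_pairedI continuous_map_id[unfolded id_def]) auto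
    from continuous_map_compose[OF this cont] show ?thesis by (simp add: o_def)
  qed
  then have "continuous_map euclidean euclidean
      (\<lambda>u. mdist (metric (UNIV, d)) (sc u x) (sc u y))"
    by (intro continuous_map_mdist) (simp_all add: Metric_space.mtopology_of[OF ms])
  then show ?thesis
    by (simp add: Metric_space.mdist_metric[OF ms])
qed

lemma right_haar_prob_borel_measurable:
  assumes "right_haar_prob \<mu>" and "f \<in> borel_measurable borel"
  shows "f \<in> borel_measurable \<mu>"
proof -
  have "sets \<mu> = sets (restrict_space borel unit_sphere)"
    using assms(1) unfolding right_haar_prob_def by simp
  then show ?thesis
    using measurable_restrict_space1[OF assms(2)] by (subst measurable_cong_sets) auto
qed

theorem proposition3:
  fixes sc :: "'k::real_normed_div_algebra \<Rightarrow> 'e::ab_group_add \<Rightarrow> 'e"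
    and d :: "'e \<Rightarrow> 'e \<Rightarrow> real"
    and \<mu> :: "'k measure"
    and C0 C1 C2 C3 :: real
  assumes "metric_vector_space sc d"
    and "translation_invariant_C C0 d"
    and "lipschitz_multiplicative C1 C2 C3 sc d"
    and "right_haar_prob \<mu>"
  shows "\<forall>x y. asymp sc (d0 \<mu> sc d) x y = (\<integral>u. asymp sc d (sc u x) (sc u y) \<partial>\<mu>)"
proof (intro allI)
  fix x y
  have vs: "left_vector_space sc" and ms: "Metric_space UNIV d"
    using assms(1) unfolding metric_vector_space_def by auto
  interpret prob_space \<mu>
    using assms(4) unfolding right_haar_prob_def by simp
  define s where "s n u = d (sc (of_nat n) (sc u x)) (sc (of_nat n) (sc u y)) / real n" for n u
  have s_LIMSEQ: "(\<lambda>n. s n u) \<longlonglongrightarrow> asymp sc d (sc u x) (sc u y)" for u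
    unfolding s_def using vs ms assms(2) by (rule asymp_LIMSEQ)
  have s_measurable: "s n \<in> borel_measurable \<mu>" for n
    unfolding s_def left_vector_space_scale_of_nat_commute[OF vs]
    by (intro borel_measurable_divide borel_measurable_const
        right_haar_prob_borel_measurable[OF assms(4)] borel_measurable_continuous_onI
        metric_vector_space_continuous_on_dist_scale[OF assms(1)])
  have s_bounded: "AE u in \<mu>. norm (s n u) \<le> C1 * d x y + C2 + C3 + 2 * C0" for n
  proof (rule AE_I2)
    fix u assume "u \<in> space \<mu>"
    then have "norm u = 1"
      using assms(4) unfolding right_haar_prob_def unit_sphere_def by simp
    then show "norm (s n u) \<le> C1 * d x y + C2 + C3 + 2 * C0"
      unfolding s_def real_norm_def by (rule dist_scale_of_nat_div_unit_le[OF vs ms assms(2,3)])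
  qed
  have "(\<lambda>n. integral\<^sup>L \<mu> (s n)) \<longlonglongrightarrow> (\<integral>u. asymp sc d (sc u x) (sc u y) \<partial>\<mu>)"
    using borel_measurable_LIMSEQ_real[OF s_LIMSEQ s_measurable] s_measurable s_bounded
    by (intro integral_dominated_convergence[where w = "\<lambda>_. C1 * d x y + C2 + C3 + 2 * C0"])
      (auto simp: s_LIMSEQ)
  moreover have "integral\<^sup>L \<mu> (s n) = d0 \<mu> sc d (sc (of_nat n) x) (sc (of_nat n) y) / real n" for n
    unfolding s_def d0_def left_vector_space_scale_of_nat_commute[OF vs] by simp
  ultimately show "asymp sc (d0 \<mu> sc d) x y = (\<integral>u. asymp sc d (sc u x) (sc u y) \<partial>\<mu>)"
    unfolding asymp_def by (simp add: limI)
qed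

end
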